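(* Let $H$ be an ASC-hypergraph and $M\subseteq H$. Then every $M$-antichain misses $H$ if and only if there is a construction $K$ of $H$ with $M\subseteq K$.
   Context: A hypergraph is a finite set $H$ of nonempty subsets of some finite set; its carrier is $\bigcup H$. For a family $F$ and set $Y$, $F_Y=\{X\in F\mid X\subseteq Y\}$. A hypergraph partition of $H$ is a partition $\{H_1,\dots,H_n\}$ ($n\ge0$) of the set $H$ with $\{\bigcup H_1,\dots,\bigcup H_n\}$ a partition of $\bigcup H$; $H$ is connected if it has exactly one hypergraph partition; the finest hypergraph partition is the unique one whose blocks are connected. $H$ is atomic if $\{x\}\in H$ for all $x\in\bigcup H$; saturated if $X_1,X_2\in H$ with $X_1\cap X_2\neq\emptyset$ imply $X_1\cup X_2\in H$. An ASC-hypergraph is one that is atomic, saturated and connected. Constructions of an atomic $H$, by induction on $|\bigcup H|$: (0) $\emptyset$ is the only construction of $\emptyset$; (1) if $|\bigcup H|\ge1$, $H$ connected, $x\in\bigcup H$, $K$ a construction of $H_{\bigcup H\setminus\{x\}}$, then $K\cup\{\bigcup H\}$ is a construction of $H$; (2) if $H$ is not connected with finest hypergraph partition $\{H_1,\dots,H_n\}$, $n\ge2$, and $K_i$ is a construction of $H_i$, then $K_1\cup\dots\cup K_n$ is a construction of $H$. For $M\subseteq H$, an $M$-antichain is a subset $S\subseteq M$ with $|S|\ge2$ such that no member of $S$ is a subset of another member of $S$; it misses $H$ when $\bigcup S\notin H$. *)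

theory Defs
  imports "HOL-Library.Disjoint_Sets"
begin

definition hypergraph :: "'a set set \<Rightarrow> bool" where
  "hypergraph H \<longleftrightarrow> finite H \<and> (\<forall>X\<in>H. X \<noteq> {} \<and> finite X)"

definition restr :: "'a set set \<Rightarrow> 'a set \<Rightarrow> 'a set set" where
  "restr F Y = {X \<in> F. X \<subseteq> Y}"

text \<open>A hypergraph partition: a partition P of the set H such that the family of
  carriers of the blocks (indexed by the blocks) is a partition of the carrier of H.\<close>
definition hyp_partition :: "'a set set \<Rightarrow> 'a set set set \<Rightarrow> bool" where
  "hyp_partition H P \<longleftrightarrow> partition_on H P \<and> partition_on (\<Union>H) (Union ` P) \<and> inj_on Union P"

definition connected_hg :: "'a set set \<Rightarrow> bool" where
  "connected_hg H \<longleftrightarrow> (\<exists>!P. hyp_partition H P)"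

definition finest_hyp_partition :: "'a set set \<Rightarrow> 'a set set set \<Rightarrow> bool" where
  "finest_hyp_partition H P \<longleftrightarrow> hyp_partition H P \<and> (\<forall>B\<in>P. connected_hg B)"

definition atomic :: "'a set set \<Rightarrow> bool" where
  "atomic H \<longleftrightarrow> (\<forall>x\<in>\<Union>H. {x} \<in> H)"

definition saturated :: "'a set set \<Rightarrow> bool" where
  "saturated H \<longleftrightarrow> (\<forall>X1\<in>H. \<forall>X2\<in>H. X1 \<inter> X2 \<noteq> {} \<longrightarrow> X1 \<union> X2 \<in> H)"

definition ASC :: "'a set set \<Rightarrow> bool" where
  "ASC H \<longleftrightarrow> hypergraph H \<and> atomic H \<and> saturated H \<and> connected_hg H"

inductive construction :: "'a set set \<Rightarrow> 'a set set \<Rightarrow> bool" where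
  empty: "construction {} {}"
| conn: "\<lbrakk>atomic H; card (\<Union>H) \<ge> 1; connected_hg H; x \<in> \<Union>H;
          construction (restr H (\<Union>H - {x})) K\<rbrakk>
         \<Longrightarrow> construction H (K \<union> {\<Union>H})"
| disc: "\<lbrakk>atomic H; \<not> connected_hg H; finest_hyp_partition H P; card P \<ge> 2;
          \<forall>B\<in>P. construction B (f B)\<rbrakk>
         \<Longrightarrow> construction H (\<Union>B\<in>P. f B)"

definition antichain :: "'a set set \<Rightarrow> 'a set set \<Rightarrow> bool" where
  "antichain M S \<longleftrightarrow> S \<subseteq> M \<and> card S \<ge> 2 \<and> (\<forall>X\<in>S. \<forall>Y\<in>S. X \<subseteq> Y \<longrightarrow> X = Y)"

definition misses :: "'a set set \<Rightarrow> 'a set set \<Rightarrow> bool" where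
  "misses S H \<longleftrightarrow> \<Union>S \<notin> H"

end

theory Submission
  imports Defs
begin

(*
  Soundness ("if"): by induction on constructions, every member of a construction K of H
  is a nonempty subset of the carrier, and no antichain S \<subseteq> K has its union in H.
  In a connected step the new top element \<Union>H cannot lie in an antichain, and all other
  members avoid the removed point x; in a disconnected step an antichain whose union is
  in H must lie inside a single block, because the block carriers are disjoint.

  Completeness ("only if"), for atomic saturated hypergraphs, by induction on the size of
  the carrier.  If H is disconnected, its finest hypergraph partition has at least two
  blocks; each block is again atomic and saturated with a smaller carrier, so we combine
  constructions of the blocks.  If H is connected and nonempty, saturation forces the
  carrier V into H; the maximal members of M - {V} would form an antichain with union V
  if they covered V, so some point x of V is avoided by all of them, and we recurse on
  the restriction of H to V - {x}.
*)

definition antichains_miss :: "'a set set \<Rightarrow> 'a set set \<Rightarrow> bool" where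
  "antichains_miss M H \<longleftrightarrow> (\<forall>S. antichain M S \<longrightarrow> misses S H)"

lemma antichains_miss_mono:
  assumes "antichains_miss M' H'" and "M \<subseteq> M'" and "H \<subseteq> H'"
  shows "antichains_miss M H"
  using assms unfolding antichains_miss_def misses_def antichain_def
  by (meson subset_trans subsetD)

lemma antichain_subset_family: "antichain M S \<Longrightarrow> S \<subseteq> M' \<Longrightarrow> antichain M' S"
  unfolding antichain_def by blast

lemma card_ge_2I:
  assumes "finite S" and "S \<noteq> {}" and "\<And>A. S \<noteq> {A}"
  shows "2 \<le> card S"
proof -
  have "card S \<noteq> 0" "card S \<noteq> 1" using assms card_1_singletonE by auto
  then show ?thesis by linarith
qed

lemma card_ge_2_other_member:
  assumes "2 \<le> card S"
  obtains X where "X \<in> S" and "X \<noteq> A"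
proof -
  have "\<not> S \<subseteq> {A}"
  proof
    assume "S \<subseteq> {A}"
    then have "card S \<le> 1" using card_mono[of "{A}" S] by simp
    then show False using assms by simp
  qed
  then show ?thesis using that by blast
qed

section \<open>Hypergraph partitions\<close>

lemma hyp_partition_iff:
  "hyp_partition H P \<longleftrightarrow> \<Union>P = H \<and> (\<forall>X\<in>P. \<Union>X \<noteq> {}) \<and>
     (\<forall>X\<in>P. \<forall>Y\<in>P. X \<noteq> Y \<longrightarrow> X \<inter> Y = {} \<and> \<Union>X \<inter> \<Union>Y = {})"
    (is "_ \<longleftrightarrow> ?cover \<and> ?nonempty \<and> ?disjoint")
proof
  assume "hyp_partition H P"
  then have P: "\<Union>P = H" "disjoint P" "{} \<notin> Union ` P" "disjoint (Union ` P)" "inj_on Union P"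
    by (auto simp: hyp_partition_def partition_on_def)
  show "?cover \<and> ?nonempty \<and> ?disjoint"
  proof (intro conjI ballI impI)
    show ?cover by (fact P(1))
  next
    fix X assume "X \<in> P"
    then show "\<Union>X \<noteq> {}" using P(3) by force
  next
    fix X Y assume XY: "X \<in> P" "Y \<in> P" "X \<noteq> Y"
    then show "X \<inter> Y = {}" using P(2) by (simp add: disjointD)
    have "\<Union>X \<noteq> \<Union>Y" using XY P(5) by (meson inj_onD)
    then show "\<Union>X \<inter> \<Union>Y = {}" using XY P(4) by (simp add: disjointD)
  qed
next
  assume "?cover \<and> ?nonempty \<and> ?disjoint"
  then have cover: ?cover and nonempty: ?nonempty and disj: ?disjoint by simp_all
  have sep: "X \<inter> Y = {}" "\<Union>X \<inter> \<Union>Y = {}" if "X \<in> P" "Y \<in> P" "X \<noteq> Y" for X Y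
    using disj[rule_format, OF that] by simp_all
  have "inj_on Union P"
  proof (rule inj_onI, rule ccontr)
    fix X Y assume "X \<in> P" "Y \<in> P" "\<Union>X = \<Union>Y" "X \<noteq> Y"
    then have "\<Union>X = {}" using sep(2)[of X Y] by simp
    then show False using nonempty \<open>X \<in> P\<close> by blast
  qed
  moreover have "disjoint (Union ` P)"
  proof (rule disjointI)
    fix a b assume "a \<in> Union ` P" "b \<in> Union ` P" "a \<noteq> b"
    then show "a \<inter> b = {}" using sep(2) by auto
  qed
  moreover have "disjoint P"
    by (rule disjointI) (rule sep(1))
  moreover have "{} \<notin> P" "{} \<notin> Union ` P" using nonempty by auto
  ultimately show "hyp_partition H P"
    using cover unfolding hyp_partition_def partition_on_def by auto
qed

lemma hyp_partition_Union: "hyp_partition H P \<Longrightarrow> \<Union>P = H"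
  by (simp add: hyp_partition_iff)

lemma hyp_partition_carrier_nonempty: "hyp_partition H P \<Longrightarrow> X \<in> P \<Longrightarrow> \<Union>X \<noteq> {}"
  by (simp add: hyp_partition_iff)

lemma hyp_partition_disjoint:
  "hyp_partition H P \<Longrightarrow> X \<in> P \<Longrightarrow> Y \<in> P \<Longrightarrow> X \<noteq> Y \<Longrightarrow> X \<inter> Y = {}"
  by (simp add: hyp_partition_iff)

lemma hyp_partition_carriers_disjoint:
  "hyp_partition H P \<Longrightarrow> X \<in> P \<Longrightarrow> Y \<in> P \<Longrightarrow> X \<noteq> Y \<Longrightarrow> \<Union>X \<inter> \<Union>Y = {}"
  by (simp add: hyp_partition_iff)

lemma hyp_partition_block_unique:
  "hyp_partition H P \<Longrightarrow> B \<in> P \<Longrightarrow> C \<in> P \<Longrightarrow> Z \<noteq> {} \<Longrightarrow> Z \<subseteq> \<Union>B \<Longrightarrow> Z \<subseteq> \<Union>C \<Longrightarrow> B = C"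
  using hyp_partition_carriers_disjoint by blast

lemma hyp_partition_block_subset: "hyp_partition H P \<Longrightarrow> B \<in> P \<Longrightarrow> B \<subseteq> H"
  using hyp_partition_Union by blast

lemma hyp_partition_finite: "finite H \<Longrightarrow> hyp_partition H P \<Longrightarrow> finite P"
  using hyp_partition_Union finite_UnionD by blast

lemma hyp_partition_single: "hypergraph H \<Longrightarrow> H \<noteq> {} \<Longrightarrow> hyp_partition H {H}"
  unfolding hyp_partition_iff hypergraph_def by auto

lemma hyp_partition_empty_iff: "hyp_partition {} P \<longleftrightarrow> P = {}"
  unfolding hyp_partition_iff by blast

lemma connected_empty: "connected_hg {}"
  unfolding connected_hg_def hyp_partition_empty_iff by blast

lemma hyp_partition_nontrivial_card:
  assumes "hyp_partition H Q" and "finite Q" and "H \<noteq> {}" and "Q \<noteq> {H}"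
  shows "2 \<le> card Q"
proof -
  have "Q \<noteq> {}" using assms(1,3) hyp_partition_Union by auto
  moreover have "Q \<noteq> {q}" for q using assms(1,4) hyp_partition_Union by fastforce
  ultimately show ?thesis using card_ge_2I assms(2) by blast
qed

lemma hyp_partition_refine:
  assumes hp: "hyp_partition H P" and B: "B \<in> P" and hq: "hyp_partition B Q"
  shows "hyp_partition H ((P - {B}) \<union> Q)"
proof -
  have cross: "X \<inter> Y = {} \<and> \<Union>X \<inter> \<Union>Y = {}" if "X \<in> Q" and "Y \<in> P - {B}" for X Y
  proof -
    have "X \<subseteq> B" using hyp_partition_Union[OF hq] \<open>X \<in> Q\<close> by blast
    moreover have "Y \<in> P" "B \<noteq> Y" using \<open>Y \<in> P - {B}\<close> by auto
    then have "B \<inter> Y = {}" "\<Union>B \<inter> \<Union>Y = {}"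
      using hyp_partition_disjoint[OF hp B] hyp_partition_carriers_disjoint[OF hp B] by auto
    ultimately show ?thesis by blast
  qed
  show ?thesis unfolding hyp_partition_iff
  proof (intro conjI ballI impI)
    show "\<Union>(P - {B} \<union> Q) = H"
      using hyp_partition_Union[OF hp] hyp_partition_Union[OF hq] B by blast
  next
    fix X assume "X \<in> P - {B} \<union> Q"
    then show "\<Union>X \<noteq> {}"
      using hyp_partition_carrier_nonempty[OF hp] hyp_partition_carrier_nonempty[OF hq] by blast
  next
    fix X Y assume XY: "X \<in> P - {B} \<union> Q" "Y \<in> P - {B} \<union> Q" "X \<noteq> Y"
    have "X \<inter> Y = {} \<and> \<Union>X \<inter> \<Union>Y = {}"
    proof (cases "X \<in> Q"; cases "Y \<in> Q")
      assume "X \<in> Q" "Y \<in> Q"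
      then show ?thesis using hq XY(3) by (simp add: hyp_partition_iff)
    next
      assume "X \<in> Q" "Y \<notin> Q"
      then show ?thesis using cross XY(2) by blast
    next
      assume "X \<notin> Q" "Y \<in> Q"
      then show ?thesis using cross[of Y X] XY(1) by blast
    next
      assume "X \<notin> Q" "Y \<notin> Q"
      then show ?thesis using hp XY by (simp add: hyp_partition_iff)
    qed
    then show "X \<inter> Y = {}" "\<Union>X \<inter> \<Union>Y = {}" by simp_all
  qed
qed

lemma hyp_partition_refine_card:
  assumes "finite H" and hp: "hyp_partition H P" and B: "B \<in> P" and hq: "hyp_partition B Q"
    and "2 \<le> card Q"
  shows "card P < card ((P - {B}) \<union> Q)"
proof -
  have fP: "finite P" using assms(1) hp hyp_partition_finite by blast
  have fQ: "finite Q"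
    using assms(1) hyp_partition_block_subset[OF hp B] hq hyp_partition_finite finite_subset by blast
  have "(P - {B}) \<inter> Q = {}"
  proof (rule ccontr)
    assume "(P - {B}) \<inter> Q \<noteq> {}"
    then obtain q where q: "q \<in> P" "q \<noteq> B" "q \<in> Q" by blast
    then have "q \<subseteq> B" "q \<inter> B = {}"
      using hyp_partition_Union[OF hq] hyp_partition_disjoint[OF hp q(1) B q(2)] by blast+
    then show False using hyp_partition_carrier_nonempty[OF hq q(3)] by blast
  qed
  then have "card ((P - {B}) \<union> Q) = card (P - {B}) + card Q"
    using fP fQ by (simp add: card_Un_disjoint)
  moreover have "card (P - {B}) + 1 = card P"
    using B fP by (metis Suc_eq_plus1 card_Suc_Diff1)
  ultimately show ?thesis using \<open>2 \<le> card Q\<close> by linarith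
qed

text \<open>A disconnected hypergraph has a finest hypergraph partition, and it has at least two
  blocks: take a partition with the largest number of blocks; a disconnected block could
  be refined.\<close>
lemma finest_hyp_partition_exists:
  assumes hg: "hypergraph H" and nc: "\<not> connected_hg H"
  shows "\<exists>P. finest_hyp_partition H P \<and> 2 \<le> card P"
proof -
  have ne: "H \<noteq> {}" using nc connected_empty by blast
  have fH: "finite H" using hg hypergraph_def by blast
  define PS where "PS = {P. hyp_partition H P}"
  have "PS \<subseteq> Pow (Pow H)" unfolding PS_def using hyp_partition_Union by fastforce
  then have fPS: "finite PS" using fH finite_subset by blast
  have "{H} \<in> PS" unfolding PS_def using hyp_partition_single hg ne by blast
  then have "Max (card ` PS) \<in> card ` PS" using fPS by (intro Max_in) auto
  then obtain P where P: "P \<in> PS" "card P = Max (card ` PS)" by (metis imageE)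
  have largest: "card Q \<le> card P" if "Q \<in> PS" for Q
    using fPS that P(2) by simp
  have hp: "hyp_partition H P" using P PS_def by blast
  have fP: "finite P" using fH hp hyp_partition_finite by blast
  have conn: "connected_hg B" if B: "B \<in> P" for B
  proof (rule ccontr)
    assume "\<not> connected_hg B"
    have BH: "B \<subseteq> H" using hyp_partition_block_subset[OF hp B] .
    then have hgB: "hypergraph B" using hg unfolding hypergraph_def by (meson finite_subset subsetD)
    have neB: "B \<noteq> {}" using hyp_partition_carrier_nonempty[OF hp B] by auto
    have "hyp_partition B {B}" using hyp_partition_single hgB neB by blast
    then obtain Q where Q: "hyp_partition B Q" "Q \<noteq> {B}"
      using \<open>\<not> connected_hg B\<close> unfolding connected_hg_def by blast
    have "finite Q" using hyp_partition_finite[OF finite_subset[OF BH fH] Q(1)] .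
    then have "2 \<le> card Q" using hyp_partition_nontrivial_card[OF Q(1) _ neB Q(2)] by blast
    then have "card P < card ((P - {B}) \<union> Q)"
      using hyp_partition_refine_card[OF fH hp B Q(1)] by blast
    moreover have "(P - {B}) \<union> Q \<in> PS" unfolding PS_def using hyp_partition_refine[OF hp B Q(1)] by simp
    ultimately show False using largest by (meson leD)
  qed
  have "P \<noteq> {H}" using conn[of H] nc by auto
  then have "2 \<le> card P" using hyp_partition_nontrivial_card[OF hp fP ne] by blast
  then show ?thesis using hp conn unfolding finest_hyp_partition_def by blast
qed

lemma hyp_partition_block_smaller:
  assumes "finite (\<Union>H)" and hp: "hyp_partition H P" and B: "B \<in> P" and "2 \<le> card P"
  shows "card (\<Union>B) < card (\<Union>H)"
proof -
  obtain C where C: "C \<in> P" "C \<noteq> B" using card_ge_2_other_member[OF \<open>2 \<le> card P\<close>] .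
  have "\<Union>C \<noteq> {}" "\<Union>C \<inter> \<Union>B = {}" "\<Union>C \<subseteq> \<Union>H" "\<Union>B \<subseteq> \<Union>H"
    using hyp_partition_carrier_nonempty[OF hp C(1)] hyp_partition_carriers_disjoint[OF hp C(1) B C(2)]
      hyp_partition_Union[OF hp] B C(1) by blast+
  then have "\<Union>B \<subset> \<Union>H" by blast
  then show ?thesis using assms(1) psubset_card_mono by blast
qed

text \<open>Blocks of a hypergraph partition inherit being an atomic saturated hypergraph:
  a singleton or a union of two overlapping edges meets the carrier of only one block.\<close>
lemma hyp_partition_block_props:
  assumes hg: "hypergraph H" and at: "atomic H" and sat: "saturated H"
    and hp: "hyp_partition H P" and B: "B \<in> P"
  shows "hypergraph B \<and> atomic B \<and> saturated B"
proof (intro conjI)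
  have BH: "B \<subseteq> H" using hyp_partition_block_subset[OF hp B] .
  have in_block: "Z \<in> B" if "Z \<in> H" "Z \<noteq> {}" "Z \<inter> \<Union>B \<noteq> {}" for Z
  proof -
    obtain C where C: "C \<in> P" "Z \<in> C" using hyp_partition_Union[OF hp] \<open>Z \<in> H\<close> by blast
    then have "\<Union>C \<inter> \<Union>B \<noteq> {}" using that(3) by blast
    then have "B = C" using hyp_partition_carriers_disjoint[OF hp B C(1)] by blast
    then show ?thesis using C by simp
  qed
  show "hypergraph B" using hg BH unfolding hypergraph_def by (meson finite_subset subsetD)
  show "atomic B" unfolding atomic_def
  proof
    fix x assume "x \<in> \<Union>B"
    then show "{x} \<in> B" using in_block[of "{x}"] at BH unfolding atomic_def by blast
  qed
  show "saturated B" unfolding saturated_def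
  proof (intro ballI impI)
    fix X1 X2 assume X: "X1 \<in> B" "X2 \<in> B" "X1 \<inter> X2 \<noteq> {}"
    then have "X1 \<union> X2 \<in> H" using sat BH unfolding saturated_def by blast
    then show "X1 \<union> X2 \<in> B" using in_block[of "X1 \<union> X2"] X by blast
  qed
qed

lemma restr_props:
  assumes "hypergraph H" and "atomic H" and "saturated H"
  shows "hypergraph (restr H Y) \<and> atomic (restr H Y) \<and> saturated (restr H Y) \<and> \<Union>(restr H Y) \<subseteq> Y"
  using assms unfolding hypergraph_def atomic_def saturated_def restr_def by auto

section \<open>Connected saturated hypergraphs\<close>

lemma two_parts_not_connected:
  assumes hg: "hypergraph H" and split: "H = H1 \<union> H2"
    and ne: "\<Union>H1 \<noteq> {}" "\<Union>H2 \<noteq> {}" and disj: "\<Union>H1 \<inter> \<Union>H2 = {}"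
  shows "\<not> connected_hg H"
proof -
  have "H1 \<noteq> H2" using ne(1) disj by auto
  have "X \<notin> H2" if "X \<in> H1" for X
  proof
    assume "X \<in> H2"
    then have "X \<subseteq> \<Union>H1 \<inter> \<Union>H2" using that by blast
    moreover have "X \<noteq> {}" using hg that split unfolding hypergraph_def by blast
    ultimately show False using disj by blast
  qed
  then have "H1 \<inter> H2 = {}" by blast
  then have "hyp_partition H {H1, H2}"
    unfolding hyp_partition_iff using split ne disj \<open>H1 \<noteq> H2\<close> by (simp add: Int_commute)
  moreover have "hyp_partition H {H}" using hyp_partition_single hg split ne(1) by blast
  moreover have "{H1, H2} \<noteq> {H}" using \<open>H1 \<noteq> H2\<close> by (metis insertCI singletonD)
  ultimately show ?thesis unfolding connected_hg_def by blast
qed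

text \<open>A nonempty connected saturated hypergraph contains its carrier: a maximal edge Y
  absorbs every edge meeting it, so all other edges lie outside Y, and by connectedness
  there are none.\<close>
lemma connected_carrier_mem:
  assumes hg: "hypergraph H" and sat: "saturated H" and con: "connected_hg H" and ne: "H \<noteq> {}"
  shows "\<Union>H \<in> H"
proof -
  have fin: "finite H" using hg hypergraph_def by blast
  obtain Y where Y: "Y \<in> H" and maximal: "\<forall>Z\<in>H. Y \<subseteq> Z \<longrightarrow> Y = Z"
    using finite_has_maximal[OF fin ne] by blast
  have absorb: "X \<subseteq> Y" if "X \<in> H" "X \<inter> Y \<noteq> {}" for X
    using sat that Y maximal unfolding saturated_def by (metis Un_upper1 Un_upper2)
  define H1 where "H1 = {X\<in>H. X \<subseteq> Y}"
  define H2 where "H2 = {X\<in>H. \<not> X \<subseteq> Y}"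
  have "H2 = {}"
  proof (rule ccontr)
    assume "H2 \<noteq> {}"
    have "H = H1 \<union> H2" "\<Union>H1 \<inter> \<Union>H2 = {}" using absorb by (auto simp: H1_def H2_def)
    moreover have "\<Union>H1 \<noteq> {}" "\<Union>H2 \<noteq> {}"
      using Y hg \<open>H2 \<noteq> {}\<close> unfolding H1_def H2_def hypergraph_def by blast+
    ultimately show False using two_parts_not_connected[OF hg] con by blast
  qed
  then have "\<Union>H = Y" using Y by (auto simp: H2_def)
  then show ?thesis using Y by simp
qed

section \<open>Soundness: constructions have no antichain with union in H\<close>

lemma construction_member:
  assumes "construction H K" and "X \<in> K"
  shows "X \<noteq> {} \<and> X \<subseteq> \<Union>H"
  using assms
proof (induction arbitrary: X rule: construction.induct)
  case empty
  then show ?case by simp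
next
  case (conn H x K)
  have "\<Union>H \<noteq> {}" using conn.hyps(2) by (metis card.empty not_one_le_zero)
  then show ?case using conn.IH conn.prems unfolding restr_def by blast
next
  case (disc H P f)
  then show ?case using hyp_partition_Union unfolding finest_hyp_partition_def by blast
qed

theorem construction_antichains_miss:
  assumes "construction H K"
  shows "antichains_miss K H"
  using assms unfolding antichains_miss_def misses_def
proof (induction rule: construction.induct)
  case empty
  then show ?case by (simp add: antichain_def)
next
  case (conn H x K)
  show ?case
  proof (intro allI impI)
    fix S assume S: "antichain (K \<union> {\<Union>H}) S"
    then have S_sub: "S \<subseteq> K \<union> {\<Union>H}" and "2 \<le> card S"
      and anti: "\<And>X Y. X \<in> S \<Longrightarrow> Y \<in> S \<Longrightarrow> X \<subseteq> Y \<Longrightarrow> X = Y"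
      unfolding antichain_def by simp_all
    have below: "X \<subseteq> \<Union>H - {x}" if "X \<in> K" for X
      using construction_member[OF conn.hyps(5) that] unfolding restr_def by blast
    text \<open>The top element is comparable with every other member, so it is not in S.\<close>
    have "\<Union>H \<notin> S"
    proof
      assume top: "\<Union>H \<in> S"
      obtain X where X: "X \<in> S" "X \<noteq> \<Union>H" using card_ge_2_other_member[OF \<open>2 \<le> card S\<close>] .
      then have "X \<in> K" using S_sub by blast
      then have "X \<subseteq> \<Union>H" using below by blast
      then show False using anti[OF X(1) top] X(2) by blast
    qed
    then have "S \<subseteq> K" using S_sub by blast
    then have "antichain K S" using antichain_subset_family[OF S] by blast
    then have "\<Union>S \<notin> restr H (\<Union>H - {x})" using conn.IH by blast
    moreover have "\<Union>S \<subseteq> \<Union>H - {x}" using \<open>S \<subseteq> K\<close> below by blast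
    ultimately show "\<Union>S \<notin> H" unfolding restr_def by blast
  qed
next
  case (disc H P f)
  have hp: "hyp_partition H P" using disc.hyps(3) by (simp add: finest_hyp_partition_def)
  show ?case
  proof (intro allI impI notI)
    fix S assume S: "antichain (\<Union>B\<in>P. f B) S" and "\<Union>S \<in> H"
    then obtain B' where B': "B' \<in> P" "\<Union>S \<in> B'" using hyp_partition_Union[OF hp] by blast
    have "S \<subseteq> f B'"
    proof
      fix X assume "X \<in> S"
      then obtain B where B: "B \<in> P" "X \<in> f B" using S unfolding antichain_def by blast
      have "construction B (f B)" using disc.IH B(1) by blast
      then have "X \<noteq> {}" "X \<subseteq> \<Union>B" using construction_member B(2) by blast+
      moreover have "X \<subseteq> \<Union>B'" using B' \<open>X \<in> S\<close> by blast
      ultimately have "B = B'" using hyp_partition_block_unique[OF hp B(1) B'(1)] by blast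
      then show "X \<in> f B'" using B by simp
    qed
    then have "antichain (f B') S" using antichain_subset_family[OF S] by blast
    then show False using disc.IH B' by blast
  qed
qed

section \<open>Completeness: building a construction through M\<close>

text \<open>In a finite family, every member lies below a maximal member, so the maximal
  members have the same union as the family.\<close>
lemma Union_maximal_members:
  assumes "finite M"
  shows "\<Union>{X\<in>M. \<forall>Y\<in>M. X \<subseteq> Y \<longrightarrow> X = Y} = \<Union>M"
proof
  show "\<Union>M \<subseteq> \<Union>{X\<in>M. \<forall>Y\<in>M. X \<subseteq> Y \<longrightarrow> X = Y}"
  proof
    fix v assume "v \<in> \<Union>M"
    then obtain X where X: "X \<in> M" "v \<in> X" by blast
    then obtain m where "m \<in> M" "X \<subseteq> m" "\<forall>Y\<in>M. m \<subseteq> Y \<longrightarrow> m = Y"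
      using finite_has_maximal2[OF assms X(1)] by blast
    then show "v \<in> \<Union>{X\<in>M. \<forall>Y\<in>M. X \<subseteq> Y \<longrightarrow> X = Y}" using X by blast
  qed
qed blast

text \<open>If V is an edge, M a finite family of subsets of V not containing V, and every
  M-antichain misses H, then some point of V is avoided by all members of M: otherwise
  the maximal members of M would form an M-antichain with union V.\<close>
lemma avoided_point:
  assumes "finite M" and "V \<in> H" and "V \<noteq> {}" and "\<forall>X\<in>M. X \<subseteq> V" and "V \<notin> M"
    and miss: "antichains_miss M H"
  shows "\<exists>x\<in>V. \<forall>X\<in>M. x \<notin> X"
proof (rule ccontr)
  assume "\<not> (\<exists>x\<in>V. \<forall>X\<in>M. x \<notin> X)"
  then have "\<Union>M = V" using assms(4) by blast
  define S where "S = {X\<in>M. \<forall>Y\<in>M. X \<subseteq> Y \<longrightarrow> X = Y}"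
  have US: "\<Union>S = V" using Union_maximal_members[OF assms(1)] \<open>\<Union>M = V\<close> unfolding S_def by blast
  have "S \<subseteq> M" unfolding S_def by blast
  then have "finite S" "V \<notin> S" using assms(1,5) finite_subset by blast+
  moreover have "S \<noteq> {}" "S \<noteq> {A}" for A using US \<open>V \<noteq> {}\<close> \<open>V \<notin> S\<close> by auto
  ultimately have "2 \<le> card S" using card_ge_2I by blast
  then have "antichain M S" unfolding antichain_def S_def by blast
  then show False using miss US \<open>V \<in> H\<close> unfolding antichains_miss_def misses_def by blast
qed

lemma construction_disconnected_step:
  fixes H M :: "'a set set"
  assumes hg: "hypergraph H" and at: "atomic H" and sat: "saturated H"
    and nc: "\<not> connected_hg H" and MH: "M \<subseteq> H" and miss: "antichains_miss M H"
    and IH: "\<And>(B :: 'a set set) N. card (\<Union>B) < card (\<Union>H) \<Longrightarrow> hypergraph B \<Longrightarrow> atomic B \<Longrightarrow> saturated B \<Longrightarrow>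
               N \<subseteq> B \<Longrightarrow> antichains_miss N B \<Longrightarrow> \<exists>K. construction B K \<and> N \<subseteq> K"
  shows "\<exists>K. construction H K \<and> M \<subseteq> K"
proof -
  obtain P where P: "finest_hyp_partition H P" "2 \<le> card P"
    using finest_hyp_partition_exists hg nc by blast
  have hp: "hyp_partition H P" using P(1) finest_hyp_partition_def by blast
  have "\<exists>K. construction B K \<and> M \<inter> B \<subseteq> K" if B: "B \<in> P" for B
  proof (rule IH[of B "M \<inter> B"])
    show "card (\<Union>B) < card (\<Union>H)"
      using hyp_partition_block_smaller[OF _ hp B P(2)] hg hypergraph_def by blast
    show "hypergraph B" "atomic B" "saturated B"
      using hyp_partition_block_props[OF hg at sat hp B] by blast+
    show "antichains_miss (M \<inter> B) B"
      using antichains_miss_mono[OF miss] hyp_partition_block_subset[OF hp B] by blast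
  qed blast
  then obtain f where f: "\<And>B. B \<in> P \<Longrightarrow> construction B (f B) \<and> M \<inter> B \<subseteq> f B" by metis
  have "construction H (\<Union>B\<in>P. f B)"
    by (rule construction.disc) (use at nc P f in auto)
  moreover have "M \<subseteq> (\<Union>B\<in>P. f B)" using MH hyp_partition_Union[OF hp] f by blast
  ultimately show ?thesis by blast
qed

lemma construction_connected_step:
  fixes H M :: "'a set set"
  assumes hg: "hypergraph H" and at: "atomic H" and sat: "saturated H"
    and con: "connected_hg H" and ne: "H \<noteq> {}" and MH: "M \<subseteq> H" and miss: "antichains_miss M H"
    and IH: "\<And>(B :: 'a set set) N. card (\<Union>B) < card (\<Union>H) \<Longrightarrow> hypergraph B \<Longrightarrow> atomic B \<Longrightarrow> saturated B \<Longrightarrow>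
               N \<subseteq> B \<Longrightarrow> antichains_miss N B \<Longrightarrow> \<exists>K. construction B K \<and> N \<subseteq> K"
  shows "\<exists>K. construction H K \<and> M \<subseteq> K"
proof -
  define V where "V = \<Union>H"
  have VH: "V \<in> H" using connected_carrier_mem hg sat con ne V_def by blast
  have finV: "finite V" and Vne: "V \<noteq> {}" using VH hg unfolding V_def hypergraph_def by blast+
  define M' where "M' = M - {V}"
  have M'M: "M' \<subseteq> M" and M'V: "\<forall>X\<in>M'. X \<subseteq> V" and "V \<notin> M'"
    using MH unfolding M'_def V_def by blast+
  have "finite M'" using M'M MH hg unfolding hypergraph_def by (meson finite_subset)
  moreover have "antichains_miss M' H" using antichains_miss_mono[OF miss M'M] by blast
  ultimately obtain x where x: "x \<in> V" "\<forall>X\<in>M'. x \<notin> X"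
    using avoided_point[OF _ VH Vne M'V \<open>V \<notin> M'\<close>] by blast
  define H' where "H' = restr H (V - {x})"
  have H': "hypergraph H'" "atomic H'" "saturated H'" "\<Union>H' \<subseteq> V - {x}"
    using restr_props[OF hg at sat] H'_def by blast+
  have "\<Union>H' \<subset> V" using H'(4) x(1) by blast
  then have smaller: "card (\<Union>H') < card (\<Union>H)" using psubset_card_mono[OF finV] V_def by blast
  have "M' \<subseteq> H'"
  proof
    fix X assume "X \<in> M'"
    then have "X \<in> H" "X \<subseteq> V - {x}" using x(2) M'V M'M MH by blast+
    then show "X \<in> H'" unfolding H'_def restr_def by blast
  qed
  moreover have "H' \<subseteq> H" unfolding H'_def restr_def by blast
  then have "antichains_miss M' H'" using antichains_miss_mono[OF miss M'M] by blast
  ultimately obtain K' where K': "construction H' K'" "M' \<subseteq> K'"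
    using IH[OF smaller H'(1-3)] by blast
  have "card (\<Union>H) \<ge> 1" using finV Vne V_def by (simp add: Suc_leI card_gt_0_iff)
  then have "construction H (K' \<union> {\<Union>H})"
    using construction.conn[of H x K'] at con x K'(1) H'_def V_def by blast
  moreover have "M \<subseteq> K' \<union> {\<Union>H}" using K'(2) M'_def V_def by blast
  ultimately show ?thesis by blast
qed

theorem construction_through_family:
  assumes "hypergraph H" and "atomic H" and "saturated H" and "M \<subseteq> H"
    and "antichains_miss M H"
  shows "\<exists>K. construction H K \<and> M \<subseteq> K"
  using assms
proof (induction "card (\<Union>H)" arbitrary: H M rule: less_induct)
  case less
  consider "H = {}" | "H \<noteq> {}" "connected_hg H" | "\<not> connected_hg H" by blast
  then show ?case
  proof cases
    case 1
    then show ?thesis using less.prems(4) construction.empty by blast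
  next
    case 2
    then show ?thesis using construction_connected_step less.prems less.hyps by blast
  next
    case 3
    then show ?thesis using construction_disconnected_step less.prems less.hyps by blast
  qed
qed

theorem proposition6p12:
  fixes H M :: "'a set set"
  assumes "ASC H" and "M \<subseteq> H"
  shows "(\<forall>S. antichain M S \<longrightarrow> misses S H) \<longleftrightarrow> (\<exists>K. construction H K \<and> M \<subseteq> K)"
proof
  assume "\<forall>S. antichain M S \<longrightarrow> misses S H"
  then show "\<exists>K. construction H K \<and> M \<subseteq> K"
    using construction_through_family assms unfolding ASC_def antichains_miss_def by blast
next
  assume "\<exists>K. construction H K \<and> M \<subseteq> K"
  then obtain K where "construction H K" "M \<subseteq> K" by blast
  then show "\<forall>S. antichain M S \<longrightarrow> misses S H"
    using construction_antichains_miss antichains_miss_mono[of K H M H]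
    unfolding antichains_miss_def by blast
qed

end
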